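(* Let $V=\mathbb{C}^n$ be the defining representation of $GL_n(\mathbb{C})$, restricted to $T\rtimes S_n$, and let $k\ge 0$. Let $A_k^n$ be the set of $k$-tuples of nonnegative integers $(a_1,\dots,a_k)$ with $a_1+2a_2+\dots+ka_k=k$ and $a_1+a_2+\dots+a_k\le n$. Then as representations of $T\rtimes S_n$, $$\mathrm{Sym}^k(V)\cong\bigoplus_{(a_1,\dots,a_k)\in A_k^n}\tilde{M}((a_1),(a_2),\dots,(a_k)),$$ where $(a)$ denotes the one-row partition with $a$ boxes (the empty partition if $a=0$).
   Context: Let $T\subset GL_n(\mathbb{C})$ be the diagonal torus, $S_n$ the permutation matrices, and $T\rtimes S_n\cong\mathbb{C}^\times\wr S_n$ the monomial matrices. For a partition $\lambda$ of $r$ and integer $k$, $S^{\lambda,k}$ is the representation of $\mathbb{C}^\times\wr S_r$ on the Specht module $S^\lambda$ with each copy of $\mathbb{C}^\times$ acting by $z\mapsto z^k$. For a composition $\nu=(\nu_1,\dots,\nu_\ell)$ of $n$ and integers $\mathbf{w}$, $M(\nu,\mathbf{w}):=\mathrm{Ind}_{(\mathbb{C}^\times\wr S_{\nu_1})\times\dots\times(\mathbb{C}^\times\wr S_{\nu_\ell})}^{\mathbb{C}^\times\wr S_n}(S^{(\nu_1),w_1}\otimes\dots\otimes S^{(\nu_\ell),w_\ell})$ (block-diagonal subgroup). For partitions $\lambda^1,\dots,\lambda^j$, $\lambda^i=(\lambda^i_1,\dots,\lambda^i_{\ell_i})$, of total size $m\le n$, $\tilde{M}(\lambda^1,\dots,\lambda^j):=M((n-m,\lambda^1_1,\dots,\lambda^1_{\ell_1},\dots,\lambda^j_1,\dots,\lambda^j_{\ell_j}),(0,1,\dots,1,\dots,j,\dots,j))$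 with $\ell_i$ entries equal to $i$ (the part $n-m$ omitted if zero). *)

theory Defs
  imports Complex_Main "HOL-Combinatorics.Permutations" "HOL-Library.Multiset"
begin

text \<open>An element (t, sigma) stands for the monomial matrix diag(t) * P_sigma, where
  P_sigma e_j = e_(sigma j); coordinates are indexed by 0..n-1.\<close>

type_synonym mon = "(nat \<Rightarrow> complex) \<times> (nat \<Rightarrow> nat)"

definition mon_grp :: "nat \<Rightarrow> mon set" where
  "mon_grp n = {(t, \<sigma>). (\<forall>j<n. t j \<noteq> 0) \<and> (\<forall>j\<ge>n. t j = 1) \<and> \<sigma> permutes {..<n}}"

definition mon_mult :: "mon \<Rightarrow> mon \<Rightarrow> mon" where
  "mon_mult g h = ((\<lambda>j. fst g j * fst h (inv (snd g) j)), snd g \<circ> snd h)"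

definition mon_mat :: "mon \<Rightarrow> nat \<Rightarrow> nat \<Rightarrow> complex" where
  "mon_mat g i j = (if i = snd g j then fst g i else 0)"

definition rep_iso ::
  "'g set \<Rightarrow> ('x \<Rightarrow> complex) set \<Rightarrow> ('g \<Rightarrow> ('x \<Rightarrow> complex) \<Rightarrow> ('x \<Rightarrow> complex))
     \<Rightarrow> ('y \<Rightarrow> complex) set \<Rightarrow> ('g \<Rightarrow> ('y \<Rightarrow> complex) \<Rightarrow> ('y \<Rightarrow> complex)) \<Rightarrow> bool" where
  "rep_iso G W1 A1 W2 A2 \<longleftrightarrow>
     (\<exists>\<phi>. bij_betw \<phi> W1 W2 \<and>
        (\<forall>x\<in>W1. \<forall>y\<in>W1. \<phi> (\<lambda>i. x i + y i) = (\<lambda>i. \<phi> x i + \<phi> y i)) \<and>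
        (\<forall>x\<in>W1. \<forall>c. \<phi> (\<lambda>i. c * x i) = (\<lambda>i. c * \<phi> x i)) \<and>
        (\<forall>g\<in>G. \<forall>x\<in>W1. \<phi> (A1 g x) = A2 g (\<phi> x)))"

subsection \<open>Symmetric power of the defining representation (as symmetric tensors)\<close>

definition idx_lists :: "nat \<Rightarrow> nat \<Rightarrow> nat list set" where
  "idx_lists n k = {js. length js = k \<and> set js \<subseteq> {..<n}}"

definition sym_space :: "nat \<Rightarrow> nat \<Rightarrow> (nat list \<Rightarrow> complex) set" where
  "sym_space n k = {T. (\<forall>is. is \<notin> idx_lists n k \<longrightarrow> T is = 0) \<and>
                       (\<forall>is js. mset is = mset js \<longrightarrow> T is = T js)}"

definition sym_act :: "nat \<Rightarrow> nat \<Rightarrow> mon \<Rightarrow> (nat list \<Rightarrow> complex) \<Rightarrow> (nat list \<Rightarrow> complex)" where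
  "sym_act n k g T = (\<lambda>is. if is \<in> idx_lists n k then
       (\<Sum>js\<in>idx_lists n k. (\<Prod>l<k. mon_mat g (is ! l) (js ! l)) * T js) else 0)"

text \<open>Ind_H^G W = {f : G -> W | f(h g) = h . f(g) for h in H}, (g' . f)(g) = f(g g').
  A function G -> W is encoded as f :: 'g * 'y => complex, vanishing off G.\<close>

definition ind_space ::
  "'g set \<Rightarrow> ('g \<Rightarrow> 'g \<Rightarrow> 'g) \<Rightarrow> 'g set \<Rightarrow> ('y \<Rightarrow> complex) set
     \<Rightarrow> ('g \<Rightarrow> ('y \<Rightarrow> complex) \<Rightarrow> ('y \<Rightarrow> complex)) \<Rightarrow> ('g \<times> 'y \<Rightarrow> complex) set" where
  "ind_space G gmul H W B =
     {f. (\<forall>g\<in>G. (\<lambda>y. f (g, y)) \<in> W) \<and> (\<forall>g y. g \<notin> G \<longrightarrow> f (g, y) = 0) \<and>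
         (\<forall>h\<in>H. \<forall>g\<in>G. (\<lambda>y. f (gmul h g, y)) = B h (\<lambda>y. f (g, y)))}"

definition ind_act ::
  "'g set \<Rightarrow> ('g \<Rightarrow> 'g \<Rightarrow> 'g) \<Rightarrow> 'g \<Rightarrow> ('g \<times> 'y \<Rightarrow> complex) \<Rightarrow> ('g \<times> 'y \<Rightarrow> complex)" where
  "ind_act G gmul g' f = (\<lambda>(g, y). if g \<in> G then f (gmul g g', y) else 0)"

text \<open>Block index of coordinate j for the composition nu (as a list of parts).\<close>
definition block :: "nat list \<Rightarrow> nat \<Rightarrow> nat" where
  "block \<nu> j = (LEAST i. j < sum_list (take (Suc i) \<nu>))"

text \<open>Block-diagonal subgroup (C^x wr S_nu1) x ... x (C^x wr S_nul).\<close>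
definition block_sub :: "nat list \<Rightarrow> mon set" where
  "block_sub \<nu> = {g \<in> mon_grp (sum_list \<nu>). \<forall>j<sum_list \<nu>. block \<nu> (snd g j) = block \<nu> j}"

text \<open>The one-dimensional representation S^((nu_1),w_1) (x) ... (x) S^((nu_l),w_l) of the
  block subgroup: the Specht module of a one-row partition is the trivial representation
  of the symmetric group, and each copy of C^x in the i-th block acts by z |-> z^(w_i).\<close>
definition M_char :: "nat list \<Rightarrow> int list \<Rightarrow> mon \<Rightarrow> complex" where
  "M_char \<nu> w g = (\<Prod>j<sum_list \<nu>. fst g j powi (w ! block \<nu> j))"

definition M_space :: "nat list \<Rightarrow> int list \<Rightarrow> (mon \<times> unit \<Rightarrow> complex) set" where
  "M_space \<nu> w = ind_space (mon_grp (sum_list \<nu>)) mon_mult (block_sub \<nu>) UNIV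
                    (\<lambda>h v. (\<lambda>u. M_char \<nu> w h * v u))"

definition M_act :: "nat list \<Rightarrow> mon \<Rightarrow> (mon \<times> unit \<Rightarrow> complex) \<Rightarrow> (mon \<times> unit \<Rightarrow> complex)" where
  "M_act \<nu> = ind_act (mon_grp (sum_list \<nu>)) mon_mult"

text \<open>Partitions are lists of positive parts; the i-th partition (1-based) gets weight i,
  the leading part n - m gets weight 0 and is omitted if zero.\<close>
definition tM_parts :: "nat \<Rightarrow> nat list list \<Rightarrow> nat list" where
  "tM_parts n lams = (let m = sum_list (map sum_list lams) in
      (if n - m = 0 then [] else [n - m]) @ concat lams)"

definition tM_weights :: "nat \<Rightarrow> nat list list \<Rightarrow> int list" where
  "tM_weights n lams = (let m = sum_list (map sum_list lams) in
      (if n - m = 0 then [] else [0]) @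
      concat (map (\<lambda>i. replicate (length (lams ! i)) (int (Suc i))) [0..<length lams]))"

definition tM_space :: "nat \<Rightarrow> nat list list \<Rightarrow> (mon \<times> unit \<Rightarrow> complex) set" where
  "tM_space n lams = M_space (tM_parts n lams) (tM_weights n lams)"

definition tM_act :: "nat \<Rightarrow> nat list list \<Rightarrow> mon \<Rightarrow> (mon \<times> unit \<Rightarrow> complex) \<Rightarrow> (mon \<times> unit \<Rightarrow> complex)" where
  "tM_act n lams = M_act (tM_parts n lams)"

definition one_row :: "nat \<Rightarrow> nat list" where
  "one_row a = (if a = 0 then [] else [a])"

definition dsum_space ::
  "'a set \<Rightarrow> ('a \<Rightarrow> ('x \<Rightarrow> complex) set) \<Rightarrow> ('a \<times> 'x \<Rightarrow> complex) set" where
  "dsum_space I W = {F. \<forall>a. (\<lambda>x. F (a, x)) \<in> (if a \<in> I then W a else {\<lambda>x. 0})}"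

definition dsum_act ::
  "'a set \<Rightarrow> ('a \<Rightarrow> 'g \<Rightarrow> ('x \<Rightarrow> complex) \<Rightarrow> ('x \<Rightarrow> complex)) \<Rightarrow> 'g
     \<Rightarrow> ('a \<times> 'x \<Rightarrow> complex) \<Rightarrow> ('a \<times> 'x \<Rightarrow> complex)" where
  "dsum_act I A g F = (\<lambda>(a, x). if a \<in> I then A a g (\<lambda>x. F (a, x)) x else 0)"

subsection \<open>The index set A_k^n (a_i stored at list position i-1)\<close>

definition A_set :: "nat \<Rightarrow> nat \<Rightarrow> nat list set" where
  "A_set k n = {a. length a = k \<and> (\<Sum>i<k. Suc i * a ! i) = k \<and> sum_list a \<le> n}"

end

theory Submission
  imports Defs
begin

text \<open>A symmetric tensor T is determined by its coefficients on the monomials x^\<alpha> of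
  degree k (index lists up to order), and the monomial matrix g = diag(t) P_\<sigma> maps x^\<alpha> to a
  multiple of x^(\<alpha> \<circ> \<sigma>\<inverse>). The S_n-orbit of an exponent vector \<alpha> is determined by its type
  a (a_i = number of coordinates of \<alpha> equal to i), which ranges over A_k^n, and contains
  the standard exponent vector (0, ..., 0, 1, ..., 1, 2, ..., 2, ...) with a_i entries equal
  to i. Its stabiliser is the block subgroup of M~((a_1), ..., (a_k)), which acts on the
  standard monomial through the character defining M~. So the span of each orbit is induced
  from that character: T corresponds to the family of functions
  g \<mapsto> (g T)(standard monomial of type a), and conversely the coefficient of a monomial of
  type a is the value of the a-th function at a permutation carrying the standard monomial
  to it.\<close>

lemma sum_lessThan_add:
  "(\<Sum>j<m + (n::nat). f j) = (\<Sum>j<m. f j) + (\<Sum>j<n. f (m + j))"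
  by (induction n) (simp_all add: add.assoc)

lemma prod_lessThan_nth: "(\<Prod>l<length L. f (L ! l)) = prod_list (map f L)"
  by (induction L) (simp_all add: prod.lessThan_Suc_shift del: prod.lessThan_Suc)

lemma card_lessThan_filter: "card {j. j < (n::nat) \<and> P j} = (\<Sum>j<n. if P j then 1 else 0)"
proof (induction n)
  case (Suc n)
  have "{j. j < Suc n \<and> P j} = (if P n then insert n {j. j < n \<and> P j} else {j. j < n \<and> P j})"
    by (auto simp: less_Suc_eq)
  then show ?case using Suc by simp
qed simp

lemma card_lessThan_filter_permute:
  assumes "\<sigma> permutes {..<(n::nat)}"
  shows "card {j. j < n \<and> P (\<sigma> j)} = card {j. j < n \<and> P j}"
proof -
  have "card {j. j < n \<and> P (\<sigma> j)} = (\<Sum>j<n. if P (\<sigma> j) then 1 else 0)"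
    by (rule card_lessThan_filter)
  also have "\<dots> = (\<Sum>j<n. if P j then 1 else 0)"
    using sum.permute[OF assms, of "\<lambda>j. if P j then 1 else 0", symmetric] by (simp add: comp_def)
  also have "\<dots> = card {j. j < n \<and> P j}"
    by (rule card_lessThan_filter[symmetric])
  finally show ?thesis .
qed

lemma count_mset_map_upt: "count (mset (map f [0..<n])) v = card {j. j < n \<and> f j = v}"
  by (induction n) (simp_all add: card_lessThan_filter)

lemma count_image_mset_inv:
  assumes "bij \<sigma>"
  shows "count (image_mset (inv \<sigma>) M) y = count M (\<sigma> y)"
proof -
  have "inv \<sigma> -` {y} = {\<sigma> y}"
    using assms by (auto simp: bij_inv_eq_iff inv_f_f bij_is_inj)
  then have "count (image_mset (inv \<sigma>) M) y = sum (count M) ({\<sigma> y} \<inter> set_mset M)"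
    by (simp add: count_image_mset)
  also have "\<dots> = count M (\<sigma> y)"
    by (cases "\<sigma> y \<in># M") (auto simp: count_eq_zero_iff)
  finally show ?thesis .
qed

lemma prod_list_map_mset_cong: "mset L = mset L' \<Longrightarrow> prod_list (map f L) = prod_list (map f L')"
  for f :: "'a \<Rightarrow> 'b::comm_monoid_mult"
  by (simp flip: prod_mset_prod_list)

lemma prod_list_map_mult:
  "prod_list (map (\<lambda>x. f x * g x) L) = prod_list (map f L) * prod_list (map g L)"
  for f g :: "'a \<Rightarrow> 'b::comm_monoid_mult"
  by (induction L) (simp_all add: ac_simps)

lemma mset_eq_if_nonzero_counts_eq:
  fixes X Y :: "nat multiset"
  assumes "size X = size Y" and "\<And>v. v \<noteq> 0 \<Longrightarrow> count X v = count Y v"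
  shows "X = Y"
proof -
  have nonzero: "filter_mset (\<lambda>v. v \<noteq> 0) X = filter_mset (\<lambda>v. v \<noteq> 0) Y"
    by (rule multiset_eqI) (use assms(2) in auto)
  have "size Z = count Z 0 + size (filter_mset (\<lambda>v. v \<noteq> 0) Z)" for Z :: "nat multiset"
    by (metis add.commute filter_eq_replicate_mset multiset_partition size_replicate_mset size_union)
  then have "count X 0 = count Y 0"
    using nonzero assms(1) by (metis add_right_cancel)
  then show ?thesis
    using assms(2) by (intro multiset_eqI) (metis)
qed

lemma permutes_match_values:
  assumes "mset (map x [0..<n]) = mset (map y [0..<n])"
  obtains p where "p permutes {..<n}" and "\<And>j. j < n \<Longrightarrow> x j = y (p j)"
proof -
  obtain p where p: "p permutes {..<length (map y [0..<n])}"
    and xy: "permute_list p (map y [0..<n]) = map x [0..<n]"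
    using mset_eq_permutation[OF assms] .
  have "x j = y (p j)" if "j < n" for j
    using arg_cong[OF xy, of "\<lambda>xs. xs ! j"] permute_list_nth[OF p] permutes_in_image[OF p] that
    by simp
  with p show thesis using that by simp
qed

lemma sum_mult_card_level_sets:
  assumes "\<forall>j<(n::nat). \<gamma> j \<le> k"
  shows "(\<Sum>i<k. f (Suc i) * card {j. j < n \<and> \<gamma> j = Suc i})
       = (\<Sum>j<n. if \<gamma> j = 0 then 0 else (f (\<gamma> j) :: nat))"
proof -
  have "f (Suc i) * card {j. j < n \<and> \<gamma> j = Suc i} = (\<Sum>j<n. if \<gamma> j = Suc i then f (Suc i) else 0)"
    for i
    unfolding card_lessThan_filter sum_distrib_left by (intro sum.cong) simp_all
  then have "(\<Sum>i<k. f (Suc i) * card {j. j < n \<and> \<gamma> j = Suc i})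
      = (\<Sum>i<k. \<Sum>j<n. if \<gamma> j = Suc i then f (Suc i) else 0)"
    by simp
  also have "\<dots> = (\<Sum>j<n. \<Sum>i<k. if \<gamma> j = Suc i then f (Suc i) else 0)"
    by (rule sum.swap)
  also have "\<dots> = (\<Sum>j<n. if \<gamma> j = 0 then 0 else f (\<gamma> j))"
  proof (rule sum.cong)
    fix j assume "j \<in> {..<n}"
    then have "\<gamma> j \<le> k" using assms by simp
    then show "(\<Sum>i<k. if \<gamma> j = Suc i then f (Suc i) else 0) = (if \<gamma> j = 0 then 0 else f (\<gamma> j))"
      by (cases "\<gamma> j") (auto simp: sum.delta' cong: if_cong)
  qed simp
  finally show ?thesis .
qed

section \<open>Blocks of a composition\<close>

lemma block_Cons:
  assumes "j < x + sum_list \<nu>"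
  shows "block (x # \<nu>) j = (if j < x then 0 else Suc (block \<nu> (j - x)))"
proof (cases "j < x")
  case True
  have "(LEAST i. j < sum_list (take (Suc i) (x # \<nu>))) = 0"
    by (rule Least_eq_0) (use True in simp)
  then show ?thesis using True by (simp add: block_def)
next
  case False
  have bound: "j < sum_list (take (Suc (length \<nu>)) (x # \<nu>))" using assms by simp
  have "(LEAST i. j < sum_list (take (Suc i) (x # \<nu>)))
      = Suc (LEAST i. j < sum_list (take (Suc (Suc i)) (x # \<nu>)))"
    by (rule Least_Suc[where P = "\<lambda>i. j < sum_list (take (Suc i) (x # \<nu>))", OF bound])
      (use False in simp)
  also have "(\<lambda>i. j < sum_list (take (Suc (Suc i)) (x # \<nu>))) = (\<lambda>i. j - x < sum_list (take (Suc i) \<nu>))"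
    using False by auto
  finally show ?thesis using False by (simp add: block_def)
qed

lemma block_less_length: "j < sum_list \<nu> \<Longrightarrow> block \<nu> j < length \<nu>"
proof (induction \<nu> arbitrary: j)
  case Nil
  then show ?case by simp
next
  case (Cons x \<nu>)
  then show ?case using Cons.IH[of "j - x"] by (simp add: block_Cons)
qed

lemma sum_block: "(\<Sum>j<sum_list \<nu>. f (block \<nu> j)) = (\<Sum>i<length \<nu>. \<nu> ! i * f i)"
proof (induction \<nu> arbitrary: f)
  case Nil
  then show ?case by simp
next
  case (Cons x \<nu>)
  have "(\<Sum>j<sum_list (x # \<nu>). f (block (x # \<nu>) j))
      = (\<Sum>j<x. f (block (x # \<nu>) j)) + (\<Sum>j<sum_list \<nu>. f (block (x # \<nu>) (x + j)))"
    by (simp add: sum_lessThan_add)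
  also have "\<dots> = x * f 0 + (\<Sum>j<sum_list \<nu>. f (Suc (block \<nu> j)))"
    by (simp add: block_Cons)
  also have "\<dots> = (\<Sum>i<length (x # \<nu>). (x # \<nu>) ! i * f i)"
    using Cons.IH[of "\<lambda>i. f (Suc i)"] by (simp add: sum.lessThan_Suc_shift del: sum.lessThan_Suc)
  finally show ?case .
qed

abbreviation row_parts :: "nat \<Rightarrow> nat list \<Rightarrow> nat list" where
  "row_parts n a \<equiv> tM_parts n (map one_row a)"

abbreviation row_weights :: "nat \<Rightarrow> nat list \<Rightarrow> int list" where
  "row_weights n a \<equiv> tM_weights n (map one_row a)"

definition one_row_weights :: "nat list \<Rightarrow> int list" where
  "one_row_weights a =
     concat (map (\<lambda>i. replicate (length (one_row (a ! i))) (int (Suc i))) [0..<length a])"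

lemma one_row_weights_snoc:
  "one_row_weights (a @ [x]) = one_row_weights a @ replicate (length (one_row x)) (int (Suc (length a)))"
proof -
  have "map (\<lambda>i. replicate (length (one_row ((a @ [x]) ! i))) (int (Suc i))) [0..<length a]
      = map (\<lambda>i. replicate (length (one_row (a ! i))) (int (Suc i))) [0..<length a]"
    by (intro map_cong) (auto simp: nth_append)
  note same_prefix = this
  show ?thesis
    unfolding one_row_weights_def length_append_singleton upt_Suc_append[OF le0] map_append
      concat_append same_prefix
    by simp
qed

lemma length_one_row_weights: "length (one_row_weights a) = length (concat (map one_row a))"
proof (induction a rule: rev_induct)
  case Nil
  then show ?case by (simp add: one_row_weights_def)
next
  case (snoc x a)
  then show ?case by (simp add: one_row_weights_snoc one_row_def)
qed

lemma one_row_weights_subset: "set (one_row_weights a) \<subseteq> (\<lambda>i. int (Suc i)) ` {..<length a}"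
proof (induction a rule: rev_induct)
  case Nil
  then show ?case by (simp add: one_row_weights_def)
next
  case (snoc x a)
  then show ?case by (auto simp: one_row_weights_snoc one_row_def)
qed

lemma distinct_one_row_weights: "distinct (one_row_weights a)"
proof (induction a rule: rev_induct)
  case Nil
  then show ?case by (simp add: one_row_weights_def)
next
  case (snoc x a)
  have "int (Suc (length a)) \<notin> set (one_row_weights a)"
    using one_row_weights_subset[of a] by auto
  with snoc show ?case by (simp add: one_row_weights_snoc one_row_def)
qed

lemma sum_list_zip_one_row_weights:
  "sum_list (map (\<lambda>(x, w). x * f w) (zip (concat (map one_row a)) (one_row_weights a)))
     = (\<Sum>i<length a. a ! i * f (int (Suc i)))"
proof (induction a rule: rev_induct)
  case Nil
  then show ?case by (simp add: one_row_weights_def)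
next
  case (snoc x a)
  have "zip (concat (map one_row (a @ [x]))) (one_row_weights (a @ [x]))
      = zip (concat (map one_row a)) (one_row_weights a)
          @ zip (one_row x) (replicate (length (one_row x)) (int (Suc (length a))))"
    by (simp add: one_row_weights_snoc zip_append length_one_row_weights)
  moreover have "(\<Sum>i<length (a @ [x]). (a @ [x]) ! i * f (int (Suc i)))
      = (\<Sum>i<length a. a ! i * f (int (Suc i))) + x * f (int (Suc (length a)))"
    by (simp add: nth_append)
  ultimately show ?case
    using snoc by (cases "x = 0") (simp_all add: one_row_def[of x] one_row_def[of 0])
qed

lemma sum_list_one_row [simp]: "sum_list (map (sum_list \<circ> one_row) a) = sum_list a"
  by (induction a) (simp_all add: one_row_def)

lemma sum_list_concat_one_row: "sum_list (concat (map one_row a)) = sum_list a"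
  by (induction a) (simp_all add: one_row_def)

lemma row_parts_eq:
  "row_parts n a = (if n - sum_list a = 0 then [] else [n - sum_list a]) @ concat (map one_row a)"
  by (simp add: tM_parts_def)

lemma row_weights_eq:
  "row_weights n a = (if n - sum_list a = 0 then [] else [0]) @ one_row_weights a"
proof -
  have "map (\<lambda>i. replicate (length (map one_row a ! i)) (int (Suc i))) [0..<length a]
      = map (\<lambda>i. replicate (length (one_row (a ! i))) (int (Suc i))) [0..<length a]"
    by (intro map_cong) auto
  note same = this
  show ?thesis
    unfolding tM_weights_def Let_def length_map same one_row_weights_def by simp
qed

lemma length_row_parts: "length (row_parts n a) = length (row_weights n a)"
  by (simp add: row_parts_eq row_weights_eq length_one_row_weights)

lemma distinct_row_weights: "distinct (row_weights n a)"
  using distinct_one_row_weights[of a] one_row_weights_subset[of a]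
  by (auto simp: row_weights_eq)

lemma row_weights_nonneg: "w \<in> set (row_weights n a) \<Longrightarrow> 0 \<le> w"
  using one_row_weights_subset[of a] by (auto simp: row_weights_eq split: if_splits)

lemma sum_list_row_parts: "sum_list a \<le> n \<Longrightarrow> sum_list (row_parts n a) = n"
  by (simp add: row_parts_eq sum_list_concat_one_row)

lemma sum_row_parts_weights:
  "(\<Sum>i<length (row_parts n a). row_parts n a ! i * f (row_weights n a ! i))
     = (n - sum_list a) * f 0 + (\<Sum>i<length a. a ! i * f (int (Suc i)))"
proof -
  have zip_sum: "(\<Sum>i<length xs. xs ! i * f (ws ! i)) = sum_list (map (\<lambda>(x, w). x * f w) (zip xs ws))"
    if "length xs = length ws" for xs :: "nat list" and ws
    using that
  proof (induction xs arbitrary: ws)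
    case (Cons x xs)
    then show ?case
      by (cases ws) (auto simp: sum.lessThan_Suc_shift simp del: sum.lessThan_Suc)
  qed simp
  show ?thesis
    unfolding zip_sum[OF length_row_parts]
    using sum_list_zip_one_row_weights[of f a] length_one_row_weights[of a]
    by (simp add: row_parts_eq row_weights_eq)
qed

section \<open>Types of monomials and standard monomials\<close>

text \<open>The exponent of coordinate j is the weight of its block, which gives the exponent
  vector (0, ..., 0, 1, ..., 1, 2, ..., 2, ...) with a_i entries equal to i.\<close>

definition std_exponent :: "nat \<Rightarrow> nat list \<Rightarrow> nat \<Rightarrow> nat" where
  "std_exponent n a j = nat (row_weights n a ! block (row_parts n a) j)"

lemma A_setD:
  assumes "a \<in> A_set k n"
  shows "length a = k" and "(\<Sum>i<k. Suc i * a ! i) = k" and "sum_list a \<le> n"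
  using assms by (auto simp: A_set_def)

lemma row_weight_std_exponent:
  assumes "sum_list a \<le> n" and "j < n"
  shows "row_weights n a ! block (row_parts n a) j = int (std_exponent n a j)"
proof -
  have "block (row_parts n a) j < length (row_weights n a)"
    using block_less_length[of j "row_parts n a"] assms length_row_parts sum_list_row_parts
    by simp
  then have "0 \<le> row_weights n a ! block (row_parts n a) j"
    by (rule row_weights_nonneg[OF nth_mem])
  then show ?thesis by (simp add: std_exponent_def)
qed

lemma sum_std_exponent_fun:
  assumes "sum_list a \<le> n"
  shows "(\<Sum>j<n. f (std_exponent n a j))
       = (n - sum_list a) * f 0 + (\<Sum>i<length a. a ! i * f (Suc i))"
  using sum_block[of "\<lambda>i. f (nat (row_weights n a ! i))" "row_parts n a"]
    sum_row_parts_weights[of n a "\<lambda>w. f (nat w)"] sum_list_row_parts[OF assms]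
  by (simp add: std_exponent_def del: of_nat_Suc)

lemma sum_std_exponent:
  assumes "a \<in> A_set k n"
  shows "(\<Sum>j<n. std_exponent n a j) = k"
  using sum_std_exponent_fun[OF A_setD(3)[OF assms], of id] A_setD[OF assms]
  by (simp add: mult.commute)

lemma card_std_exponent:
  assumes "a \<in> A_set k n" and "0 < v"
  shows "card {j. j < n \<and> std_exponent n a j = v} = (if v \<le> k then a ! (v - 1) else 0)"
proof -
  have "card {j. j < n \<and> std_exponent n a j = v} = (\<Sum>i<k. a ! i * (if Suc i = v then 1 else 0))"
    using sum_std_exponent_fun[OF A_setD(3)[OF assms(1)], of "\<lambda>e. if e = v then 1 else 0"]
      A_setD(1)[OF assms(1)] assms(2)
    by (simp add: card_lessThan_filter)
  also have "\<dots> = (\<Sum>i<k. if i = v - 1 then a ! i else 0)"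
    using assms(2) by (intro sum.cong) auto
  also have "\<dots> = (if v \<le> k then a ! (v - 1) else 0)"
    using assms(2) by (auto simp: sum.delta)
  finally show ?thesis .
qed

lemma block_eq_if_std_exponent_eq:
  assumes "sum_list a \<le> n" and "x < n" and "y < n"
    and "std_exponent n a x = std_exponent n a y"
  shows "block (row_parts n a) x = block (row_parts n a) y"
proof -
  have "block (row_parts n a) x < length (row_weights n a)"
    and "block (row_parts n a) y < length (row_weights n a)"
    using block_less_length sum_list_row_parts[OF assms(1)] length_row_parts assms(2,3)
    by metis+
  moreover have "row_weights n a ! block (row_parts n a) x = row_weights n a ! block (row_parts n a) y"
    using row_weight_std_exponent[OF assms(1)] assms(2-4) by simp
  ultimately show ?thesis
    using nth_eq_iff_index_eq[OF distinct_row_weights] by blast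
qed

definition mult_list :: "nat \<Rightarrow> (nat \<Rightarrow> nat) \<Rightarrow> nat list" where
  "mult_list n f = concat (map (\<lambda>j. replicate (f j) j) [0..<n])"

lemma count_mult_list: "count (mset (mult_list n f)) j = (if j < n then f j else 0)"
  by (induction n) (auto simp: mult_list_def)

lemma length_mult_list: "length (mult_list n f) = (\<Sum>j<n. f j)"
  by (induction n) (auto simp: mult_list_def)

lemma set_mult_list_subset: "set (mult_list n f) \<subseteq> {..<n}"
  by (auto simp: mult_list_def)

lemma prod_list_map_mult_list: "prod_list (map g (mult_list n f)) = (\<Prod>j<n. g j ^ f j)"
  by (induction n) (auto simp: mult_list_def)

definition std_monomial :: "nat \<Rightarrow> nat list \<Rightarrow> nat list" where
  "std_monomial n a = mult_list n (std_exponent n a)"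

lemma std_monomial_in_idx_lists: "a \<in> A_set k n \<Longrightarrow> std_monomial n a \<in> idx_lists n k"
  using sum_std_exponent set_mult_list_subset length_mult_list
  by (auto simp: idx_lists_def std_monomial_def)

lemma count_std_monomial:
  "count (mset (std_monomial n a)) j = (if j < n then std_exponent n a j else 0)"
  by (simp add: std_monomial_def count_mult_list)

lemma M_char_row_parts:
  assumes "sum_list a \<le> n"
  shows "M_char (row_parts n a) (row_weights n a) h = prod_list (map (fst h) (std_monomial n a))"
proof -
  have "M_char (row_parts n a) (row_weights n a) h = (\<Prod>j<n. fst h j ^ std_exponent n a j)"
    unfolding M_char_def sum_list_row_parts[OF assms]
    by (intro prod.cong) (simp_all add: row_weight_std_exponent[OF assms])
  then show ?thesis
    by (simp add: std_monomial_def prod_list_map_mult_list)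
qed

definition monomial_type :: "nat \<Rightarrow> nat \<Rightarrow> nat multiset \<Rightarrow> nat list" where
  "monomial_type n k M = map (\<lambda>i. card {j. j < n \<and> count M j = Suc i}) [0..<k]"

lemma idx_listsD:
  assumes "is \<in> idx_lists n k"
  shows "length is = k" and "set is \<subseteq> {..<n}"
  using assms by (auto simp: idx_lists_def)

lemma idx_lists_mset_cong: "mset is = mset js \<Longrightarrow> is \<in> idx_lists n k \<longleftrightarrow> js \<in> idx_lists n k"
  using mset_eq_length[of "is" js] mset_eq_setD[of "is" js] by (auto simp: idx_lists_def)

lemma sum_count_idx_list: "is \<in> idx_lists n k \<Longrightarrow> (\<Sum>j<n. count (mset is) j) = k"
  using sum_count_set[of "is" "{..<n}"] by (simp add: idx_lists_def count_mset)

lemma count_idx_list_le: "is \<in> idx_lists n k \<Longrightarrow> count (mset is) j \<le> k"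
  using count_le_size[of "mset is" j] by (simp add: idx_lists_def)

lemma count_idx_list_eq_0: "is \<in> idx_lists n k \<Longrightarrow> n \<le> j \<Longrightarrow> count (mset is) j = 0"
  by (auto simp: idx_lists_def count_eq_zero_iff)

lemma monomial_type_in_A_set:
  assumes "is \<in> idx_lists n k"
  shows "monomial_type n k (mset is) \<in> A_set k n"
proof -
  have bounded: "\<forall>j<n. count (mset is) j \<le> k"
    using count_idx_list_le[OF assms] by simp
  have "(\<Sum>i<k. Suc i * monomial_type n k (mset is) ! i)
      = (\<Sum>i<k. Suc i * card {j. j < n \<and> count (mset is) j = Suc i})"
    by (simp add: monomial_type_def)
  also have "\<dots> = (\<Sum>j<n. if count (mset is) j = 0 then 0 else count (mset is) j)"
    by (rule sum_mult_card_level_sets[OF bounded, of "\<lambda>x. x"])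
  also have "\<dots> = (\<Sum>j<n. count (mset is) j)"
    by (intro sum.cong) simp_all
  finally have "(\<Sum>i<k. Suc i * monomial_type n k (mset is) ! i) = (\<Sum>j<n. count (mset is) j)" .
  moreover have "sum_list (monomial_type n k (mset is)) = (\<Sum>j<n. if count (mset is) j = 0 then 0 else 1)"
    using sum_mult_card_level_sets[OF bounded, of "\<lambda>_. 1"]
    by (simp add: monomial_type_def sum_list_sum_nth atLeast0LessThan)
  moreover have "(\<Sum>j<n. if count (mset is) j = 0 then 0 else 1) \<le> (\<Sum>j<n. 1::nat)"
    by (intro sum_mono) simp
  ultimately show ?thesis
    using sum_count_idx_list[OF assms] by (simp add: A_set_def monomial_type_def)
qed

lemma monomial_type_std_monomial:
  assumes "a \<in> A_set k n" and "\<sigma> permutes {..<n}"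
  shows "monomial_type n k (mset (map (inv \<sigma>) (std_monomial n a))) = a"
proof -
  have "card {j. j < n \<and> count (mset (map (inv \<sigma>) (std_monomial n a))) j = Suc i} = a ! i"
    if "i < k" for i
  proof -
    have "{j. j < n \<and> count (mset (map (inv \<sigma>) (std_monomial n a))) j = Suc i}
        = {j. j < n \<and> std_exponent n a (\<sigma> j) = Suc i}"
      using assms(2) permutes_in_image[OF assms(2)]
      by (auto simp: count_image_mset_inv permutes_bij count_std_monomial)
    then show ?thesis
      using card_lessThan_filter_permute[OF assms(2), of "\<lambda>j. std_exponent n a j = Suc i"]
        card_std_exponent[OF assms(1), of "Suc i"] that
      by simp
  qed
  then show ?thesis
    using A_setD(1)[OF assms(1)] by (simp add: monomial_type_def list_eq_iff_nth_eq)
qed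

lemma mset_exponents_monomial_type:
  assumes "is \<in> idx_lists n k"
  shows "mset (map (count (mset is)) [0..<n])
       = mset (map (std_exponent n (monomial_type n k (mset is))) [0..<n])"
proof (rule mset_eq_if_nonzero_counts_eq)
  fix v :: nat
  assume "v \<noteq> 0"
  have "card {j. j < n \<and> count (mset is) j = v}
      = (if v \<le> k then monomial_type n k (mset is) ! (v - 1) else 0)"
  proof (cases "v \<le> k")
    case True
    moreover have "[0..<k] ! (v - 1) = v - 1"
      using True \<open>v \<noteq> 0\<close> by (intro nth_upt[of 0, simplified]) simp
    ultimately show ?thesis using \<open>v \<noteq> 0\<close> by (simp add: monomial_type_def)
  next
    case False
    then have "\<forall>j. count (mset is) j \<noteq> v"
      using count_idx_list_le[OF assms] by (metis le_trans nat_le_linear)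
    with False show ?thesis by simp
  qed
  then show "count (mset (map (count (mset is)) [0..<n])) v
           = count (mset (map (std_exponent n (monomial_type n k (mset is))) [0..<n])) v"
    unfolding count_mset_map_upt
    using card_std_exponent[OF monomial_type_in_A_set[OF assms], of v] \<open>v \<noteq> 0\<close> by simp
qed simp

lemma std_perm_exists:
  assumes "is \<in> idx_lists n k"
  shows "\<exists>\<tau>. \<tau> permutes {..<n}
           \<and> mset (map (inv \<tau>) (std_monomial n (monomial_type n k (mset is)))) = mset is"
proof -
  obtain p where p: "p permutes {..<n}"
    and exponents: "\<And>j. j < n \<Longrightarrow> count (mset is) j = std_exponent n (monomial_type n k (mset is)) (p j)"
    using permutes_match_values[OF mset_exponents_monomial_type[OF assms]] by blast
  have "mset (map (inv p) (std_monomial n (monomial_type n k (mset is)))) = mset is"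
  proof (rule multiset_eqI)
    fix j
    show "count (mset (map (inv p) (std_monomial n (monomial_type n k (mset is))))) j = count (mset is) j"
      using exponents[of j] count_idx_list_eq_0[OF assms, of j] permutes_in_image[OF p, of j]
        permutes_not_in[OF p, of j]
      by (cases "j < n") (simp_all add: count_image_mset_inv permutes_bij[OF p] count_std_monomial)
  qed
  with p show ?thesis by blast
qed

definition std_perm :: "nat \<Rightarrow> nat \<Rightarrow> nat multiset \<Rightarrow> nat \<Rightarrow> nat" where
  "std_perm n k M =
     (SOME \<tau>. \<tau> permutes {..<n} \<and> mset (map (inv \<tau>) (std_monomial n (monomial_type n k M))) = M)"

lemma std_perm:
  assumes "is \<in> idx_lists n k"
  shows "std_perm n k (mset is) permutes {..<n}"
    and "mset (map (inv (std_perm n k (mset is))) (std_monomial n (monomial_type n k (mset is)))) = mset is"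
  using someI_ex[OF std_perm_exists[OF assms]] by (simp_all add: std_perm_def)

section \<open>The monomial group acting on symmetric tensors\<close>

lemma sym_spaceD:
  assumes "T \<in> sym_space n k"
  shows "is \<notin> idx_lists n k \<Longrightarrow> T is = 0"
    and "mset is = mset js \<Longrightarrow> T is = T js"
  using assms unfolding sym_space_def by blast+

lemma mon_grpD:
  assumes "g \<in> mon_grp n"
  shows "snd g permutes {..<n}"
  using assms by (auto simp: mon_grp_def)

lemma perm_in_mon_grp: "\<tau> permutes {..<n} \<Longrightarrow> ((\<lambda>_. 1), \<tau>) \<in> mon_grp n"
  by (simp add: mon_grp_def)

lemma mon_mult_closed:
  assumes "g \<in> mon_grp n" and "h \<in> mon_grp n"
  shows "mon_mult g h \<in> mon_grp n"
proof -
  have inv_g: "inv (snd g) permutes {..<n}"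
    using permutes_inv[OF mon_grpD[OF assms(1)]] .
  show ?thesis
    using assms permutes_in_image[OF inv_g] permutes_not_in[OF inv_g]
      permutes_compose[OF mon_grpD[OF assms(2)] mon_grpD[OF assms(1)]]
    by (auto simp: mon_grp_def mon_mult_def)
qed

lemma map_inv_in_idx_lists:
  "\<sigma> permutes {..<n} \<Longrightarrow> L \<in> idx_lists n k \<Longrightarrow> map (inv \<sigma>) L \<in> idx_lists n k"
  using permutes_in_image[OF permutes_inv] by (fastforce simp: idx_lists_def)

lemma sym_act_formula:
  assumes g: "g \<in> mon_grp n" and L: "L \<in> idx_lists n k"
  shows "sym_act n k g T L = prod_list (map (fst g) L) * T (map (inv (snd g)) L)"
proof -
  have \<sigma>: "snd g permutes {..<n}" using mon_grpD[OF g] .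
  have lengths: "length L = k" using idx_listsD(1)[OF L] .
  have matrix_entries: "(\<Prod>l<k. mon_mat g (L ! l) (js ! l))
      = (if js = map (inv (snd g)) L then prod_list (map (fst g) L) else 0)"
    if "js \<in> idx_lists n k" for js
  proof -
    have preimage: "js = map (inv (snd g)) L \<longleftrightarrow> (\<forall>l<k. L ! l = snd g (js ! l))"
      using idx_listsD(1)[OF that] lengths permutes_inverses[OF \<sigma>]
      by (auto simp: list_eq_iff_nth_eq)
    show ?thesis
    proof (cases "js = map (inv (snd g)) L")
      case True
      then have "(\<Prod>l<k. mon_mat g (L ! l) (js ! l)) = (\<Prod>l<k. fst g (L ! l))"
        using preimage by (auto simp: mon_mat_def intro: prod.cong)
      with True show ?thesis
        using lengths prod_lessThan_nth[of "fst g" L] by simp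
    next
      case False
      then obtain l where "l < k" and "L ! l \<noteq> snd g (js ! l)"
        using preimage by blast
      then have "(\<Prod>l<k. mon_mat g (L ! l) (js ! l)) = 0"
        by (intro prod_zero) (auto simp: mon_mat_def intro!: bexI[of _ l])
      with False show ?thesis by simp
    qed
  qed
  have "sym_act n k g T L = (\<Sum>js\<in>idx_lists n k. (\<Prod>l<k. mon_mat g (L ! l) (js ! l)) * T js)"
    using L by (simp add: sym_act_def)
  also have "\<dots>
      = (\<Sum>js\<in>idx_lists n k. if js = map (inv (snd g)) L then prod_list (map (fst g) L) * T js else 0)"
    by (intro sum.cong) (simp_all add: matrix_entries)
  also have "\<dots> = prod_list (map (fst g) L) * T (map (inv (snd g)) L)"
    using map_inv_in_idx_lists[OF \<sigma> L] finite_lists_length_eq[of "{..<n}" k]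
    by (simp add: sum.delta idx_lists_def conj_commute)
  finally show ?thesis .
qed

lemma sym_act_mult:
  assumes g: "g \<in> mon_grp n" and h: "h \<in> mon_grp n"
  shows "sym_act n k (mon_mult g h) T = sym_act n k g (sym_act n k h T)"
proof
  fix L
  show "sym_act n k (mon_mult g h) T L = sym_act n k g (sym_act n k h T) L"
  proof (cases "L \<in> idx_lists n k")
    case True
    have \<sigma>: "snd g permutes {..<n}" and \<rho>: "snd h permutes {..<n}"
      using mon_grpD g h by blast+
    have L': "map (inv (snd g)) L \<in> idx_lists n k"
      by (rule map_inv_in_idx_lists[OF \<sigma> True])
    have "inv (snd g \<circ> snd h) = inv (snd h) \<circ> inv (snd g)"
      using o_inv_distrib[OF permutes_bij[OF \<sigma>] permutes_bij[OF \<rho>]] .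
    then have "sym_act n k (mon_mult g h) T L
        = prod_list (map (fst g) L)
          * (prod_list (map (fst h) (map (inv (snd g)) L)) * T (map (inv (snd h)) (map (inv (snd g)) L)))"
      unfolding sym_act_formula[OF mon_mult_closed[OF g h] True]
      by (simp add: mon_mult_def prod_list_map_mult comp_def mult.assoc)
    also have "\<dots> = sym_act n k g (sym_act n k h T) L"
      by (simp only: sym_act_formula[OF g True] sym_act_formula[OF h L'])
    finally show ?thesis .
  next
    case False
    then show ?thesis by (simp add: sym_act_def)
  qed
qed

lemma sym_act_in_sym_space:
  assumes g: "g \<in> mon_grp n" and T: "T \<in> sym_space n k"
  shows "sym_act n k g T \<in> sym_space n k"
  unfolding sym_space_def
proof (intro CollectI conjI allI impI)
  fix L :: "nat list"
  assume "L \<notin> idx_lists n k"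
  then show "sym_act n k g T L = 0" by (simp add: sym_act_def)
next
  fix L L' :: "nat list"
  assume same: "mset L = mset L'"
  show "sym_act n k g T L = sym_act n k g T L'"
  proof (cases "L \<in> idx_lists n k")
    case True
    have L': "L' \<in> idx_lists n k" using True idx_lists_mset_cong[OF same] by blast
    have "T (map (inv (snd g)) L) = T (map (inv (snd g)) L')"
      using sym_spaceD(2)[OF T] same by simp
    then show ?thesis
      unfolding sym_act_formula[OF g True] sym_act_formula[OF g L']
        prod_list_map_mset_cong[OF same] by simp
  next
    case False
    then have "L' \<notin> idx_lists n k" using idx_lists_mset_cong[OF same] by blast
    with False show ?thesis by (simp add: sym_act_def)
  qed
qed

lemma sym_act_add: "sym_act n k g (\<lambda>i. x i + y i) L = sym_act n k g x L + sym_act n k g y L"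
  by (simp add: sym_act_def sum.distrib distrib_left)

lemma sym_act_scale: "sym_act n k g (\<lambda>i. c * x i) L = c * sym_act n k g x L"
  by (simp add: sym_act_def sum_distrib_left mult.left_commute)

lemma block_sub_stabilises_std_monomial:
  assumes "sum_list a \<le> n" and h: "h \<in> block_sub (row_parts n a)"
  shows "mset (map (inv (snd h)) (std_monomial n a)) = mset (std_monomial n a)"
proof (rule multiset_eqI)
  fix y
  have h_mon: "h \<in> mon_grp n"
    and blocks: "\<forall>j<n. block (row_parts n a) (snd h j) = block (row_parts n a) j"
    using h sum_list_row_parts[OF assms(1)] by (auto simp: block_sub_def)
  have \<sigma>: "snd h permutes {..<n}" using mon_grpD[OF h_mon] .
  show "count (mset (map (inv (snd h)) (std_monomial n a))) y = count (mset (std_monomial n a)) y"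
    using blocks permutes_in_image[OF \<sigma>, of y] permutes_not_in[OF \<sigma>, of y]
    by (simp add: count_image_mset_inv permutes_bij[OF \<sigma>] count_std_monomial std_exponent_def)
qed

lemma sym_act_block_sub:
  assumes a: "a \<in> A_set k n" and h: "h \<in> block_sub (row_parts n a)" and S: "S \<in> sym_space n k"
  shows "sym_act n k h S (std_monomial n a)
       = M_char (row_parts n a) (row_weights n a) h * S (std_monomial n a)"
proof -
  have "h \<in> mon_grp n"
    using h sum_list_row_parts[OF A_setD(3)[OF a]] by (simp add: block_sub_def)
  then have "sym_act n k h S (std_monomial n a)
      = prod_list (map (fst h) (std_monomial n a)) * S (map (inv (snd h)) (std_monomial n a))"
    by (rule sym_act_formula[OF _ std_monomial_in_idx_lists[OF a]])
  also have "S (map (inv (snd h)) (std_monomial n a)) = S (std_monomial n a)"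
    by (rule sym_spaceD(2)[OF S block_sub_stabilises_std_monomial[OF A_setD(3)[OF a] h]])
  finally show ?thesis
    by (simp add: M_char_row_parts[OF A_setD(3)[OF a]])
qed

lemma block_sub_if_preserves_std_exponent:
  assumes "sum_list a \<le> n" and h: "h \<in> mon_grp n"
    and preserves: "\<And>j. j < n \<Longrightarrow> std_exponent n a (snd h j) = std_exponent n a j"
  shows "h \<in> block_sub (row_parts n a)"
proof -
  have "block (row_parts n a) (snd h j) = block (row_parts n a) j" if "j < n" for j
    using that permutes_in_image[OF mon_grpD[OF h], of j]
    by (intro block_eq_if_std_exponent_eq[OF assms(1)] preserves) simp_all
  then show ?thesis
    using h sum_list_row_parts[OF assms(1)] by (simp add: block_sub_def)
qed

text \<open>Factor g = h \<tau> with h = diag(t) P_(\<sigma> \<tau>\<inverse>), which lies in the block subgroup because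
  \<tau> and \<sigma> move the standard monomial to the same monomial.\<close>

lemma tM_space_value:
  assumes a: "a \<in> A_set k n" and f: "f \<in> tM_space n (map one_row a)"
    and g: "g \<in> mon_grp n" and \<tau>: "\<tau> permutes {..<n}"
    and orbit: "mset (map (inv \<tau>) (std_monomial n a)) = mset (map (inv (snd g)) (std_monomial n a))"
  shows "f (g, u) = prod_list (map (fst g) (std_monomial n a)) * f (((\<lambda>_. 1), \<tau>), u)"
proof -
  have a_le: "sum_list a \<le> n" using A_setD(3)[OF a] .
  have \<sigma>: "snd g permutes {..<n}" using mon_grpD[OF g] .
  define h where "h = (fst g, snd g \<circ> inv \<tau>)"
  have same_exponent: "std_exponent n a (\<tau> j) = std_exponent n a (snd g j)" if "j < n" for j
    using arg_cong[OF orbit, of "\<lambda>M. count M j"] that permutes_in_image[OF \<tau>] permutes_in_image[OF \<sigma>]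
    by (simp add: count_image_mset_inv permutes_bij[OF \<tau>] permutes_bij[OF \<sigma>] count_std_monomial)
  have h_mon: "h \<in> mon_grp n"
    using g permutes_compose[OF permutes_inv[OF \<tau>] \<sigma>] by (cases g) (simp add: h_def mon_grp_def)
  have "std_exponent n a (snd h j) = std_exponent n a j" if "j < n" for j
    using same_exponent[of "inv \<tau> j"] that permutes_in_image[OF permutes_inv[OF \<tau>]]
      permutes_inverses(1)[OF \<tau>]
    by (simp add: h_def)
  then have h_block: "h \<in> block_sub (row_parts n a)"
    by (rule block_sub_if_preserves_std_exponent[OF a_le h_mon])
  have factor: "mon_mult h ((\<lambda>_. 1), \<tau>) = g"
    using permutes_inv_o(2)[OF \<tau>] by (simp add: mon_mult_def h_def comp_assoc)
  have "(\<lambda>y. f (mon_mult h ((\<lambda>_. 1), \<tau>), y))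
      = (\<lambda>y. M_char (row_parts n a) (row_weights n a) h * f (((\<lambda>_. 1), \<tau>), y))"
    using f h_block perm_in_mon_grp[OF \<tau>] sum_list_row_parts[OF a_le]
    by (simp add: tM_space_def M_space_def ind_space_def)
  then have "f (g, u) = M_char (row_parts n a) (row_weights n a) h * f (((\<lambda>_. 1), \<tau>), u)"
    unfolding factor by (rule fun_cong)
  then show ?thesis
    unfolding M_char_row_parts[OF a_le] by (simp add: h_def)
qed

section \<open>The isomorphism\<close>

definition sym_to_ind :: "nat \<Rightarrow> nat \<Rightarrow> (nat list \<Rightarrow> complex) \<Rightarrow> nat list \<times> (mon \<times> unit) \<Rightarrow> complex" where
  "sym_to_ind n k T = (\<lambda>(a, (g, u)).
     if a \<in> A_set k n \<and> g \<in> mon_grp n then sym_act n k g T (std_monomial n a) else 0)"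

definition ind_to_sym :: "nat \<Rightarrow> nat \<Rightarrow> (nat list \<times> (mon \<times> unit) \<Rightarrow> complex) \<Rightarrow> nat list \<Rightarrow> complex" where
  "ind_to_sym n k F = (\<lambda>is. if is \<in> idx_lists n k
     then F (monomial_type n k (mset is), ((\<lambda>_. 1), std_perm n k (mset is)), ()) else 0)"

lemma sym_to_ind_in_dsum_space:
  assumes T: "T \<in> sym_space n k"
  shows "sym_to_ind n k T \<in> dsum_space (A_set k n) (\<lambda>a. tM_space n (map one_row a))"
  unfolding dsum_space_def
proof (intro CollectI allI)
  fix a
  show "(\<lambda>x. sym_to_ind n k T (a, x))
      \<in> (if a \<in> A_set k n then tM_space n (map one_row a) else {\<lambda>x. 0})"
  proof (cases "a \<in> A_set k n")
    case a: True
    have covariant: "sym_to_ind n k T (a, (mon_mult h g, u))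
        = M_char (row_parts n a) (row_weights n a) h * sym_to_ind n k T (a, (g, u))"
      if h: "h \<in> block_sub (row_parts n a)" and g: "g \<in> mon_grp n" for h g u
    proof -
      have h_mon: "h \<in> mon_grp n"
        using h sum_list_row_parts[OF A_setD(3)[OF a]] by (simp add: block_sub_def)
      have "sym_act n k (mon_mult h g) T (std_monomial n a)
          = sym_act n k h (sym_act n k g T) (std_monomial n a)"
        by (simp only: sym_act_mult[OF h_mon g])
      also have "\<dots> = M_char (row_parts n a) (row_weights n a) h * sym_act n k g T (std_monomial n a)"
        by (rule sym_act_block_sub[OF a h sym_act_in_sym_space[OF g T]])
      finally show ?thesis
        using a g mon_mult_closed[OF h_mon g] by (simp add: sym_to_ind_def)
    qed
    have vanishing: "sym_to_ind n k T (a, (g, u)) = 0" if "g \<notin> mon_grp n" for g u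
      using that by (simp add: sym_to_ind_def)
    show ?thesis
      using a covariant vanishing sum_list_row_parts[OF A_setD(3)[OF a]]
      by (simp add: tM_space_def M_space_def ind_space_def)
  qed (simp add: sym_to_ind_def)
qed

lemma ind_to_sym_in_sym_space: "ind_to_sym n k F \<in> sym_space n k"
  by (auto simp: sym_space_def ind_to_sym_def dest: idx_lists_mset_cong)

lemma ind_to_sym_sym_to_ind:
  assumes T: "T \<in> sym_space n k"
  shows "ind_to_sym n k (sym_to_ind n k T) = T"
proof
  fix "is"
  show "ind_to_sym n k (sym_to_ind n k T) is = T is"
  proof (cases "is \<in> idx_lists n k")
    case True
    let ?a = "monomial_type n k (mset is)" and ?\<tau> = "std_perm n k (mset is)"
    have \<tau>: "((\<lambda>_. 1), ?\<tau>) \<in> mon_grp n"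
      by (rule perm_in_mon_grp[OF std_perm(1)[OF True]])
    have "ind_to_sym n k (sym_to_ind n k T) is = sym_act n k ((\<lambda>_. 1), ?\<tau>) T (std_monomial n ?a)"
      using True monomial_type_in_A_set[OF True] \<tau> by (simp add: ind_to_sym_def sym_to_ind_def)
    also have "\<dots> = T (map (inv ?\<tau>) (std_monomial n ?a))"
      using sym_act_formula[OF \<tau> std_monomial_in_idx_lists[OF monomial_type_in_A_set[OF True]]]
      by (simp add: map_replicate_const)
    also have "\<dots> = T is"
      by (rule sym_spaceD(2)[OF T std_perm(2)[OF True]])
    finally show ?thesis .
  next
    case False
    then show ?thesis using sym_spaceD(1)[OF T False] by (simp add: ind_to_sym_def)
  qed
qed

lemma dsum_space_component:
  "F \<in> dsum_space I W \<Longrightarrow> (\<lambda>x. F (a, x)) \<in> (if a \<in> I then W a else {\<lambda>x. 0})"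
  by (simp add: dsum_space_def)

lemma dsum_tM_space_vanishing:
  assumes F: "F \<in> dsum_space (A_set k n) (\<lambda>a. tM_space n (map one_row a))"
    and outside: "\<not> (a \<in> A_set k n \<and> g \<in> mon_grp n)"
  shows "F (a, (g, u)) = 0"
proof (cases "a \<in> A_set k n")
  case a: True
  with outside have "g \<notin> mon_grp n" by simp
  then show ?thesis
    using dsum_space_component[OF F, of a] a sum_list_row_parts[OF A_setD(3)[OF a]]
    by (cases g) (simp add: tM_space_def M_space_def ind_space_def)
next
  case False
  then have "(\<lambda>y. F (a, y)) = (\<lambda>y. 0)" using dsum_space_component[OF F, of a] by simp
  then show ?thesis by (rule fun_cong[where x = "(g, u)", elim_format]) simp
qed

lemma sym_to_ind_ind_to_sym:
  assumes F: "F \<in> dsum_space (A_set k n) (\<lambda>a. tM_space n (map one_row a))"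
  shows "sym_to_ind n k (ind_to_sym n k F) = F"
proof
  fix x :: "nat list \<times> (mon \<times> unit)"
  obtain a g u where x: "x = (a, (g, u))" by (metis prod.exhaust)
  show "sym_to_ind n k (ind_to_sym n k F) x = F x"
  proof (cases "a \<in> A_set k n \<and> g \<in> mon_grp n")
    case True
    then have a: "a \<in> A_set k n" and g: "g \<in> mon_grp n" by simp_all
    have component: "(\<lambda>y. F (a, y)) \<in> tM_space n (map one_row a)"
      using dsum_space_component[OF F, of a] a by simp
    have \<sigma>: "snd g permutes {..<n}" using mon_grpD[OF g] .
    define L where "L = map (inv (snd g)) (std_monomial n a)"
    have L: "L \<in> idx_lists n k"
      unfolding L_def by (rule map_inv_in_idx_lists[OF \<sigma> std_monomial_in_idx_lists[OF a]])
    have type_L: "monomial_type n k (mset L) = a"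
      unfolding L_def by (rule monomial_type_std_monomial[OF a \<sigma>])
    define \<tau> where "\<tau> = std_perm n k (mset L)"
    have orbit: "mset (map (inv \<tau>) (std_monomial n a)) = mset L"
      using std_perm(2)[OF L] by (simp only: \<tau>_def type_L)
    have "sym_to_ind n k (ind_to_sym n k F) x = sym_act n k g (ind_to_sym n k F) (std_monomial n a)"
      using x a g by (simp add: sym_to_ind_def)
    also have "\<dots> = prod_list (map (fst g) (std_monomial n a)) * ind_to_sym n k F L"
      unfolding L_def by (rule sym_act_formula[OF g std_monomial_in_idx_lists[OF a]])
    also have "ind_to_sym n k F L = F (a, ((\<lambda>_. 1), \<tau>), u)"
      using L by (simp add: ind_to_sym_def type_L \<tau>_def)
    also have "prod_list (map (fst g) (std_monomial n a)) * F (a, ((\<lambda>_. 1), \<tau>), u) = F x"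
      using tM_space_value[OF a component g std_perm(1)[OF L, folded \<tau>_def] orbit[unfolded L_def]]
        x by simp
    finally show ?thesis .
  next
    case False
    then show ?thesis
      using dsum_tM_space_vanishing[OF F False] x by (auto simp: sym_to_ind_def)
  qed
qed

lemma sym_to_ind_equivariant:
  assumes g': "g' \<in> mon_grp n"
  shows "sym_to_ind n k (sym_act n k g' T)
       = dsum_act (A_set k n) (\<lambda>a. tM_act n (map one_row a)) g' (sym_to_ind n k T)"
proof
  fix x :: "nat list \<times> (mon \<times> unit)"
  obtain a g u where x: "x = (a, (g, u))" by (metis prod.exhaust)
  show "sym_to_ind n k (sym_act n k g' T) x
      = dsum_act (A_set k n) (\<lambda>a. tM_act n (map one_row a)) g' (sym_to_ind n k T) x"
  proof (cases "a \<in> A_set k n \<and> g \<in> mon_grp n")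
    case True
    then have a: "a \<in> A_set k n" and g: "g \<in> mon_grp n" by simp_all
    have "sym_to_ind n k (sym_act n k g' T) x = sym_act n k (mon_mult g g') T (std_monomial n a)"
      using x a g by (simp add: sym_to_ind_def sym_act_mult[OF g g'])
    also have "\<dots> = sym_to_ind n k T (a, (mon_mult g g', u))"
      using a mon_mult_closed[OF g g'] by (simp add: sym_to_ind_def)
    also have "\<dots> = dsum_act (A_set k n) (\<lambda>a. tM_act n (map one_row a)) g' (sym_to_ind n k T) x"
      using x a g sum_list_row_parts[OF A_setD(3)[OF a]]
      by (simp add: dsum_act_def tM_act_def M_act_def ind_act_def)
    finally show ?thesis .
  next
    case False
    then show ?thesis
      using x sum_list_row_parts[OF A_setD(3)]
      by (auto simp: sym_to_ind_def dsum_act_def tM_act_def M_act_def ind_act_def)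
  qed
qed

theorem proposition3p5:
  fixes n k :: nat
  shows "rep_iso (mon_grp n) (sym_space n k) (sym_act n k)
           (dsum_space (A_set k n) (\<lambda>a. tM_space n (map one_row a)))
           (dsum_act (A_set k n) (\<lambda>a. tM_act n (map one_row a)))"
  unfolding rep_iso_def
proof (intro exI conjI ballI allI)
  show "bij_betw (sym_to_ind n k) (sym_space n k)
          (dsum_space (A_set k n) (\<lambda>a. tM_space n (map one_row a)))"
    by (rule bij_betw_byWitness[where f' = "ind_to_sym n k"])
      (auto simp: ind_to_sym_sym_to_ind sym_to_ind_ind_to_sym sym_to_ind_in_dsum_space
        ind_to_sym_in_sym_space)
next
  fix x y :: "nat list \<Rightarrow> complex"
  show "sym_to_ind n k (\<lambda>i. x i + y i) = (\<lambda>i. sym_to_ind n k x i + sym_to_ind n k y i)"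
    by (auto simp: sym_to_ind_def sym_act_add)
next
  fix x :: "nat list \<Rightarrow> complex" and c
  show "sym_to_ind n k (\<lambda>i. c * x i) = (\<lambda>i. c * sym_to_ind n k x i)"
    by (auto simp: sym_to_ind_def sym_act_scale)
next
  fix g x
  assume "g \<in> mon_grp n"
  then show "sym_to_ind n k (sym_act n k g x)
           = dsum_act (A_set k n) (\<lambda>a. tM_act n (map one_row a)) g (sym_to_ind n k x)"
    by (rule sym_to_ind_equivariant)
qed

end
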